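(* Let $\varepsilon>0$, let $\mathcal S=\{S_1,\dots,S_K,S_\infty\}$ be a family of pairwise disjoint subsets of $\{2,\dots,n\}$ and $\rho\in\{1,\dots,\lceil1/\varepsilon\rceil\}^K$. Every extreme point $x^*$ of $P(\mathcal S,\rho)$ has at most two fractional components; moreover, if it has exactly two fractional components, then both lie in the same set $S_h$ for some $h\in[K]$ (not in $S_\infty$).
   Context: Minimum Knapsack data: $n$ items with costs $c\in\mathbb{R}^n_{\ge0}$, weights $w\in\mathbb{R}^n_{\ge0}$ and target $b$. For $\mathcal S$ and $\rho$ as in the claim, $P(\mathcal S,\rho)$ is the set of $x\in\mathbb{R}^n$ satisfying: $x_1=1$; $w^Tx\ge b$; $\sum_{i\in S_k}x_i=\rho_k$ for all $k\in[K]$ with $\rho_k<\lceil1/\varepsilon\rceil$; $\sum_{i\in S_k}x_i\ge\rho_k$ for all $k\in[K]$ with $\rho_k=\lceil1/\varepsilon\rceil$; $x_i=0$ for all $i\in\{2,\dots,n\}\setminus\bigcup_{k\in[K]\cup\{\infty\}}S_k$; and $0\le x_i\le1$ for all $i\in\bigcup_{k\in[K]\cup\{\infty\}}S_k$. *)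

theory Defs
  imports "HOL-Analysis.Analysis"
begin

text \<open>Vectors of R^n are represented as functions nat \<Rightarrow> real whose support is
  contained in the index set {1..n}; coordinates outside {1..n} are fixed to 0.
  The sets S_1..S_K are given by S :: nat \<Rightarrow> nat set (used on {1..K}),
  and S_\<infinity> by Sinf.\<close>

definition minknap_P ::
  "nat \<Rightarrow> (nat \<Rightarrow> real) \<Rightarrow> real \<Rightarrow> real \<Rightarrow> nat \<Rightarrow> (nat \<Rightarrow> nat set) \<Rightarrow> nat set
     \<Rightarrow> (nat \<Rightarrow> nat) \<Rightarrow> (nat \<Rightarrow> real) set" where
  "minknap_P n w b \<epsilon> K S Sinf \<rho> =
     {x. (\<forall>i. i \<notin> {1..n} \<longrightarrow> x i = 0)
       \<and> x 1 = 1
       \<and> (\<Sum>i=1..n. w i * x i) \<ge> b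
       \<and> (\<forall>k\<in>{1..K}. int (\<rho> k) < \<lceil>1/\<epsilon>\<rceil> \<longrightarrow> (\<Sum>i\<in>S k. x i) = real (\<rho> k))
       \<and> (\<forall>k\<in>{1..K}. int (\<rho> k) = \<lceil>1/\<epsilon>\<rceil> \<longrightarrow> (\<Sum>i\<in>S k. x i) \<ge> real (\<rho> k))
       \<and> (\<forall>i\<in>{2..n}. i \<notin> (\<Union>k\<in>{1..K}. S k) \<union> Sinf \<longrightarrow> x i = 0)
       \<and> (\<forall>i\<in>(\<Union>k\<in>{1..K}. S k) \<union> Sinf. 0 \<le> x i \<and> x i \<le> 1)}"

definition is_extreme_point :: "(nat \<Rightarrow> real) \<Rightarrow> (nat \<Rightarrow> real) set \<Rightarrow> bool" where
  "is_extreme_point x P \<longleftrightarrow> x \<in> P \<and>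
     \<not> (\<exists>y\<in>P. \<exists>z\<in>P. y \<noteq> z \<and> (\<exists>t::real. 0 < t \<and> t < 1 \<and> x = (\<lambda>i. (1 - t) * y i + t * z i)))"

end

theory Submission
  imports Defs
begin

text \<open>Call a direction d tangent at x if it vanishes outside the fractional coordinates of x and
  sums to zero over every group whose cardinality constraint is tight. Every tangent direction
  with w^T d = 0 can be followed a little in both directions without leaving the polytope, so at an
  extreme point no such direction is nonzero. Hence the tangent directions form a space of
  dimension at most one (the kernel of d \<mapsto> w^T d on it is trivial). But a fractional coordinate
  outside all tight groups yields a tangent unit vector, and a tight group containing one fractional
  coordinate contains a second one (its sum is an integer), yielding a tangent difference of unit
  vectors. Any two of these unit vectors and differences are independent unless the fractional
  coordinates are at most two and lie in one tight group.\<close>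

lemma eventually_at_0_affine_less:
  fixes a c r :: real
  assumes "a < r"
  shows "\<forall>\<^sub>F t in at 0. a + t * c < r"
proof -
  have "((\<lambda>t. a + t * c) \<longlongrightarrow> a + 0 * c) (at 0)" by (intro tendsto_intros)
  then show ?thesis using assms by (auto dest: order_tendstoD(2))
qed

lemma eventually_at_0_affine_greater:
  fixes a c r :: real
  assumes "r < a"
  shows "\<forall>\<^sub>F t in at 0. r < a + t * c"
proof -
  have "((\<lambda>t. a + t * c) \<longlongrightarrow> a + 0 * c) (at 0)" by (intro tendsto_intros)
  then show ?thesis using assms by (auto dest: order_tendstoD(1))
qed

lemma extreme_point_perturbation_zero:
  assumes "is_extreme_point x P"
    and "(\<lambda>i. x i + t * d i) \<in> P" and "(\<lambda>i. x i - t * d i) \<in> P" and "t \<noteq> 0"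
  shows "d = (\<lambda>i. 0)"
proof (rule ccontr)
  assume "d \<noteq> (\<lambda>i. 0)"
  then obtain p where "d p \<noteq> 0" by auto
  then have "x p + t * d p \<noteq> x p - t * d p"
    using \<open>t \<noteq> 0\<close> by simp
  then have "(\<lambda>i. x i + t * d i) \<noteq> (\<lambda>i. x i - t * d i)"
    by (auto dest: fun_cong[where x = p])
  moreover have "\<exists>s::real. 0 < s \<and> s < 1 \<and>
      x = (\<lambda>i. (1 - s) * (x i + t * d i) + s * (x i - t * d i))"
    by (rule exI[of _ "1/2"]) (simp add: algebra_simps)
  ultimately show False
    using assms(1-3) unfolding is_extreme_point_def by blast
qed

lemma extreme_point_eventually_perturbation_zero:
  assumes "is_extreme_point x P" and "\<forall>\<^sub>F t in at (0::real). (\<lambda>i. x i + t * d i) \<in> P"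
  shows "d = (\<lambda>i. 0)"
proof -
  obtain e where "e > 0" and e: "\<And>t. t \<noteq> 0 \<Longrightarrow> dist t 0 < e \<Longrightarrow> (\<lambda>i. x i + t * d i) \<in> P"
    using assms(2) unfolding eventually_at by auto
  have "(\<lambda>i. x i + (e/2) * d i) \<in> P" and "(\<lambda>i. x i + (- (e/2)) * d i) \<in> P"
    using \<open>e > 0\<close> by (intro e; simp)+
  then show ?thesis
    using extreme_point_perturbation_zero[OF assms(1), of "e/2" d] \<open>e > 0\<close> by simp
qed

lemma card_ge_3_obtain_distinct:
  assumes "3 \<le> card A"
  obtains a b c where "a \<in> A" "b \<in> A" "c \<in> A" "a \<noteq> b" "a \<noteq> c" "b \<noteq> c"
  using assms by (auto simp: card_le_Suc_iff numeral_3_eq_3 numeral_2_eq_2)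

locale minknap_vertex =
  fixes n K :: nat and w :: "nat \<Rightarrow> real" and b \<epsilon> :: real
    and S :: "nat \<Rightarrow> nat set" and Sinf :: "nat set" and \<rho> :: "nat \<Rightarrow> nat"
    and x :: "nat \<Rightarrow> real"
  assumes finite_S: "\<And>k. k \<in> {1..K} \<Longrightarrow> finite (S k)"
    and S_disjoint: "\<And>k l. k \<in> {1..K} \<Longrightarrow> l \<in> {1..K} \<Longrightarrow> k \<noteq> l \<Longrightarrow> S k \<inter> S l = {}"
    and extreme: "is_extreme_point x (minknap_P n w b \<epsilon> K S Sinf \<rho>)"
begin

abbreviation P :: "(nat \<Rightarrow> real) set" where
  "P \<equiv> minknap_P n w b \<epsilon> K S Sinf \<rho>"

definition fractional :: "nat set" where
  "fractional = {i \<in> {1..n}. x i \<notin> \<int>}"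

definition tight :: "nat \<Rightarrow> bool" where
  "tight k \<longleftrightarrow> (\<Sum>i\<in>S k. x i) = real (\<rho> k)"

definition weight :: "(nat \<Rightarrow> real) \<Rightarrow> real" where
  "weight d = (\<Sum>i=1..n. w i * d i)"

definition tangent :: "(nat \<Rightarrow> real) \<Rightarrow> bool" where
  "tangent d \<longleftrightarrow> (\<forall>i. i \<notin> fractional \<longrightarrow> d i = 0) \<and> (\<forall>k\<in>{1..K}. tight k \<longrightarrow> (\<Sum>i\<in>S k. d i) = 0)"

lemma x_in_P: "x \<in> P"
  using extreme unfolding is_extreme_point_def by blast

lemma x_outside: "i \<notin> {1..n} \<Longrightarrow> x i = 0"
  using x_in_P unfolding minknap_P_def by blast

lemma fractional_subset: "fractional \<subseteq> {2..n}"
proof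
  fix i assume i: "i \<in> fractional"
  have "x 1 = 1" using x_in_P unfolding minknap_P_def by blast
  then have "i \<noteq> 1" using i unfolding fractional_def by auto
  then show "i \<in> {2..n}" using i unfolding fractional_def by auto
qed

lemma fractional_in_groups:
  assumes "i \<in> fractional" shows "i \<in> (\<Union>k\<in>{1..K}. S k) \<union> Sinf"
proof (rule ccontr)
  assume "i \<notin> (\<Union>k\<in>{1..K}. S k) \<union> Sinf"
  then have "x i = 0"
    using x_in_P fractional_subset assms unfolding minknap_P_def by blast
  then show False using assms unfolding fractional_def by simp
qed

lemma fractional_strictly_between:
  assumes "i \<in> fractional" shows "0 < x i \<and> x i < 1"
proof -
  have "0 \<le> x i \<and> x i \<le> 1"
    using x_in_P fractional_in_groups[OF assms] unfolding minknap_P_def by blast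
  moreover have "x i \<noteq> 0" "x i \<noteq> 1"
    using assms unfolding fractional_def by auto
  ultimately show ?thesis by auto
qed

lemma not_tight_sum_greater:
  assumes "k \<in> {1..K}" "\<not> tight k" "int (\<rho> k) = \<lceil>1/\<epsilon>\<rceil>"
  shows "real (\<rho> k) < (\<Sum>i\<in>S k. x i)"
proof -
  have "(\<Sum>i\<in>S k. x i) \<ge> real (\<rho> k)"
    using x_in_P assms(1,3) unfolding minknap_P_def by blast
  then show ?thesis using assms(2) unfolding tight_def by simp
qed

lemma agrees_off_fractional_in_P:
  assumes off: "\<And>i. i \<notin> fractional \<Longrightarrow> y i = x i"
    and box: "\<And>i. i \<in> fractional \<Longrightarrow> 0 \<le> y i \<and> y i \<le> 1"
    and tight_sums: "\<And>k. k \<in> {1..K} \<Longrightarrow> tight k \<Longrightarrow> (\<Sum>i\<in>S k. y i) = (\<Sum>i\<in>S k. x i)"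
    and loose_sums: "\<And>k. k \<in> {1..K} \<Longrightarrow> \<not> tight k \<Longrightarrow> int (\<rho> k) = \<lceil>1/\<epsilon>\<rceil> \<Longrightarrow>
                       real (\<rho> k) \<le> (\<Sum>i\<in>S k. y i)"
    and weight: "b \<le> (\<Sum>i=1..n. w i * y i)"
  shows "y \<in> P"
  unfolding minknap_P_def mem_Collect_eq
proof (intro conjI allI ballI impI)
  fix i assume "i \<notin> {1..n}"
  moreover from this have "i \<notin> fractional" using fractional_subset by auto
  ultimately show "y i = 0" using off x_outside by simp
next
  have "1 \<notin> fractional" using fractional_subset by auto
  then show "y 1 = 1" using off x_in_P unfolding minknap_P_def by auto
next
  fix k assume k: "k \<in> {1..K}" "int (\<rho> k) < \<lceil>1/\<epsilon>\<rceil>"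
  then have "(\<Sum>i\<in>S k. x i) = real (\<rho> k)"
    using x_in_P unfolding minknap_P_def by blast
  then show "(\<Sum>i\<in>S k. y i) = real (\<rho> k)"
    using tight_sums k(1) unfolding tight_def by simp
next
  fix k assume "k \<in> {1..K}" "int (\<rho> k) = \<lceil>1/\<epsilon>\<rceil>"
  then show "(\<Sum>i\<in>S k. y i) \<ge> real (\<rho> k)"
    using tight_sums loose_sums unfolding tight_def by (cases "tight k") (auto simp: tight_def)
next
  fix i assume "i \<in> {2..n}" "i \<notin> (\<Union>k\<in>{1..K}. S k) \<union> Sinf"
  then have "x i = 0" using x_in_P unfolding minknap_P_def by blast
  then show "y i = 0" using off[of i] unfolding fractional_def by simp
next
  fix i assume i: "i \<in> (\<Union>k\<in>{1..K}. S k) \<union> Sinf"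
  have "0 \<le> y i \<and> y i \<le> 1"
  proof (cases "i \<in> fractional")
    case False
    then show ?thesis using x_in_P i off unfolding minknap_P_def by auto
  qed (rule box)
  then show "0 \<le> y i" "y i \<le> 1" by simp_all
qed (fact weight)

lemma perturbation_in_P:
  assumes "tangent d" and "weight d = 0"
    and between: "\<And>i. i \<in> fractional \<Longrightarrow> 0 < x i + t * d i \<and> x i + t * d i < 1"
    and loose: "\<And>k. k \<in> {1..K} \<Longrightarrow> \<not> tight k \<Longrightarrow> int (\<rho> k) = \<lceil>1/\<epsilon>\<rceil> \<Longrightarrow>
                  real (\<rho> k) < (\<Sum>i\<in>S k. x i + t * d i)"
  shows "(\<lambda>i. x i + t * d i) \<in> P"
proof (rule agrees_off_fractional_in_P)
  show "(\<Sum>i\<in>S k. x i + t * d i) = (\<Sum>i\<in>S k. x i)" if "k \<in> {1..K}" "tight k" for k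
    using assms(1) that unfolding tangent_def by (simp add: sum.distrib flip: sum_distrib_left)
  have "(\<Sum>i=1..n. w i * (x i + t * d i)) = (\<Sum>i=1..n. w i * x i) + t * weight d"
    unfolding weight_def by (simp add: algebra_simps sum.distrib sum_distrib_left)
  then show "b \<le> (\<Sum>i=1..n. w i * (x i + t * d i))"
    using x_in_P assms(2) unfolding minknap_P_def by simp
qed (use assms(1) between loose in \<open>auto simp: tangent_def less_imp_le\<close>)

lemma tangent_eventually_in_P:
  assumes "tangent d" and "weight d = 0"
  shows "\<forall>\<^sub>F t in at 0. (\<lambda>i. x i + t * d i) \<in> P"
proof -
  have "\<forall>\<^sub>F t in at 0. \<forall>i\<in>fractional. 0 < x i + t * d i \<and> x i + t * d i < 1"
    using fractional_strictly_between
    by (intro eventually_ball_finite ballI eventually_conj eventually_at_0_affine_greater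
        eventually_at_0_affine_less) (auto simp: fractional_def)
  moreover have "\<forall>\<^sub>F t in at 0. \<forall>k\<in>{k\<in>{1..K}. \<not> tight k \<and> int (\<rho> k) = \<lceil>1/\<epsilon>\<rceil>}.
                   real (\<rho> k) < (\<Sum>i\<in>S k. x i) + t * (\<Sum>i\<in>S k. d i)"
    using not_tight_sum_greater
    by (intro eventually_ball_finite ballI eventually_at_0_affine_greater) auto
  ultimately show ?thesis
  proof eventually_elim
    case (elim t)
    then show ?case
      by (intro perturbation_in_P assms) (auto simp: sum.distrib sum_distrib_left)
  qed
qed

lemma tangent_weightless_eq_0:
  assumes "tangent d" and "weight d = 0"
  shows "d = (\<lambda>i. 0)"
  using extreme_point_eventually_perturbation_zero[OF extreme tangent_eventually_in_P[OF assms]] .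

lemma weight_lincomb: "weight (\<lambda>i. a * u i + c * v i) = a * weight u + c * weight v"
  unfolding weight_def by (simp add: algebra_simps sum.distrib sum_distrib_left)

lemma tangent_lincomb:
  assumes "tangent u" and "tangent v"
  shows "tangent (\<lambda>i. a * u i + c * v i)"
  using assms unfolding tangent_def by (simp add: sum.distrib flip: sum_distrib_left)

lemma no_independent_tangents:
  assumes "tangent u" "tangent v" "u p \<noteq> 0" "v p = 0" "v q \<noteq> 0" "u q = 0"
  shows False
proof -
  define d where "d = (\<lambda>i. weight v * u i + (- weight u) * v i)"
  have "tangent d" unfolding d_def by (rule tangent_lincomb[OF assms(1,2)])
  moreover have "weight d = 0" unfolding d_def weight_lincomb by simp
  ultimately have "d = (\<lambda>i. 0)" by (rule tangent_weightless_eq_0)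
  then have "d p = 0" "d q = 0" by simp_all
  then have "weight v = 0" "weight u = 0"
    using assms(3-6) unfolding d_def by simp_all
  then have "u = (\<lambda>i. 0)" using tangent_weightless_eq_0[OF assms(1)] by blast
  then show False using assms(3) by simp
qed

definition free :: "nat \<Rightarrow> bool" where
  "free i \<longleftrightarrow> i \<in> fractional \<and> (\<forall>k\<in>{1..K}. tight k \<longrightarrow> i \<notin> S k)"

lemma tangent_indicator_free:
  assumes "free i" shows "tangent (indicator {i})"
  using assms finite_S unfolding free_def tangent_def by (auto simp: indicator_def)

lemma tangent_indicator_diff:
  assumes "k \<in> {1..K}" "tight k" "i \<in> fractional \<inter> S k" "j \<in> fractional \<inter> S k"
  shows "tangent (\<lambda>m. indicator {i} m - indicator {j} m)"
  unfolding tangent_def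
proof (intro conjI allI ballI impI)
  fix m assume "m \<notin> fractional"
  then show "indicator {i} m - indicator {j} m = (0::real)"
    using assms(3,4) by (auto simp: indicator_def)
next
  fix l assume "l \<in> {1..K}" "tight l"
  show "(\<Sum>m\<in>S l. indicator {i} m - indicator {j} m) = (0::real)"
  proof (cases "l = k")
    case True
    then show ?thesis using assms finite_S by (simp add: sum_subtractf indicator_def)
  next
    case False
    then have "i \<notin> S l" "j \<notin> S l"
      using S_disjoint[OF assms(1) \<open>l \<in> {1..K}\<close>] assms(3,4) by blast+
    then show ?thesis using finite_S \<open>l \<in> {1..K}\<close> by (simp add: sum_subtractf indicator_def)
  qed
qed

text \<open>The sum over a tight group is the integer \<open>\<rho> k\<close>, so it cannot contain exactly one
  fractional coordinate.\<close>

lemma tight_group_second_fractional: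
  assumes "k \<in> {1..K}" "tight k" "t \<in> fractional \<inter> S k"
  obtains t' where "t' \<in> fractional \<inter> S k" "t' \<noteq> t"
proof (rule ccontr)
  assume "\<not> thesis"
  with that have integral: "x j \<in> \<int>" if "j \<in> S k - {t}" for j
    using that x_outside unfolding fractional_def by (cases "j \<in> {1..n}") auto
  have "x t = real (\<rho> k) - (\<Sum>j\<in>S k - {t}. x j)"
    using sum.remove[OF finite_S[OF assms(1)], of t x] assms(2,3) unfolding tight_def by simp
  also have "\<dots> \<in> \<int>"
    using integral by (intro Ints_diff Ints_sum) auto
  finally show False using assms(3) unfolding fractional_def by simp
qed

lemma free_unique:
  assumes "free i" "free j" shows "i = j"
  using no_independent_tangents[OF tangent_indicator_free[OF assms(1)]
      tangent_indicator_free[OF assms(2)], of i j]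
  by (auto simp: indicator_def)

lemma free_excludes_tight_fractional:
  assumes "free i" "k \<in> {1..K}" "tight k"
  shows "fractional \<inter> S k = {}"
proof (rule ccontr)
  assume "fractional \<inter> S k \<noteq> {}"
  then obtain t where t: "t \<in> fractional \<inter> S k" by blast
  then obtain t' where t': "t' \<in> fractional \<inter> S k" "t' \<noteq> t"
    using tight_group_second_fractional assms(2,3) by blast
  have "i \<notin> S k" using assms unfolding free_def by blast
  then have "i \<noteq> t" "i \<noteq> t'" using t t' by auto
  then show False
    using no_independent_tangents[OF tangent_indicator_free[OF assms(1)]
        tangent_indicator_diff[OF assms(2,3) t t'(1)], of i t] t'(2)
    by (auto simp: indicator_def)
qed

lemma tight_fractional_single_group:
  assumes "k \<in> {1..K}" "tight k" "t \<in> fractional \<inter> S k"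
    and "l \<in> {1..K}" "tight l" "s \<in> fractional \<inter> S l"
  shows "k = l"
proof (rule ccontr)
  assume "k \<noteq> l"
  then have disj: "S k \<inter> S l = {}" using S_disjoint assms(1,4) by blast
  obtain t' where t': "t' \<in> fractional \<inter> S k" "t' \<noteq> t"
    using tight_group_second_fractional assms(1-3) by blast
  obtain s' where s': "s' \<in> fractional \<inter> S l" "s' \<noteq> s"
    using tight_group_second_fractional assms(4-6) by blast
  have "t \<noteq> s" "t \<noteq> s'" "t' \<noteq> s" using disj assms(3,6) t' s' by blast+
  then show False
    using no_independent_tangents[OF tangent_indicator_diff[OF assms(1,2,3) t'(1)]
        tangent_indicator_diff[OF assms(4,5,6) s'(1)], of t s] t'(2) s'(2)
    by (auto simp: indicator_def)
qed

lemma card_tight_fractional_le_2: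
  assumes "k \<in> {1..K}" "tight k"
  shows "card (fractional \<inter> S k) \<le> 2"
proof (rule ccontr)
  assume "\<not> ?thesis"
  then have "3 \<le> card (fractional \<inter> S k)" by simp
  then obtain a b c where abc: "a \<in> fractional \<inter> S k" "b \<in> fractional \<inter> S k" "c \<in> fractional \<inter> S k"
    and "a \<noteq> b" "a \<noteq> c" "b \<noteq> c"
    by (rule card_ge_3_obtain_distinct)
  then show False
    using no_independent_tangents[OF tangent_indicator_diff[OF assms abc(1,3)]
        tangent_indicator_diff[OF assms abc(2,3)], of a b]
    by (auto simp: indicator_def)
qed

theorem fractional_structure:
  "card fractional \<le> 2 \<and> (card fractional = 2 \<longrightarrow> (\<exists>h\<in>{1..K}. fractional \<subseteq> S h))"
proof (cases "\<exists>k\<in>{1..K}. tight k \<and> fractional \<inter> S k \<noteq> {}")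
  case True
  then obtain k where k: "k \<in> {1..K}" "tight k" and t: "fractional \<inter> S k \<noteq> {}" by blast
  have "fractional \<subseteq> S k"
  proof
    fix i assume i: "i \<in> fractional"
    have "\<not> free i" using free_excludes_tight_fractional k t by blast
    then obtain l where "l \<in> {1..K}" "tight l" "i \<in> S l"
      using i unfolding free_def by blast
    then show "i \<in> S k"
      using tight_fractional_single_group[OF k _ \<open>l \<in> {1..K}\<close> \<open>tight l\<close>] i t by blast
  qed
  then have "card fractional \<le> 2"
    using card_tight_fractional_le_2[OF k] by (simp add: Int_absorb2)
  then show ?thesis using k \<open>fractional \<subseteq> S k\<close> by blast
next
  case False
  then have "free i" if "i \<in> fractional" for i
    using that unfolding free_def by blast
  then have "card fractional \<le> 1"
    using free_unique card_le_Suc0_iff_eq[of fractional] by (simp add: fractional_def)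
  then show ?thesis by simp
qed

end

theorem lemma2:
  fixes n K :: nat and c w :: "nat \<Rightarrow> real" and b \<epsilon> :: real
    and S :: "nat \<Rightarrow> nat set" and Sinf :: "nat set" and \<rho> :: "nat \<Rightarrow> nat"
    and xs :: "nat \<Rightarrow> real"
  assumes c_nonneg: "\<forall>i\<in>{1..n}. c i \<ge> 0"
    and w_nonneg: "\<forall>i\<in>{1..n}. w i \<ge> 0"
    and eps_pos: "\<epsilon> > 0"
    and S_sub: "\<forall>k\<in>{1..K}. S k \<subseteq> {2..n}"
    and Sinf_sub: "Sinf \<subseteq> {2..n}"
    and S_disj: "\<forall>k\<in>{1..K}. \<forall>l\<in>{1..K}. k \<noteq> l \<longrightarrow> S k \<inter> S l = {}"
    and S_Sinf_disj: "\<forall>k\<in>{1..K}. S k \<inter> Sinf = {}"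
    and rho_range: "\<forall>k\<in>{1..K}. 1 \<le> \<rho> k \<and> int (\<rho> k) \<le> \<lceil>1/\<epsilon>\<rceil>"
    and extreme: "is_extreme_point xs (minknap_P n w b \<epsilon> K S Sinf \<rho>)"
  shows "card {i\<in>{1..n}. xs i \<notin> \<int>} \<le> 2
       \<and> (card {i\<in>{1..n}. xs i \<notin> \<int>} = 2 \<longrightarrow>
            (\<exists>h\<in>{1..K}. {i\<in>{1..n}. xs i \<notin> \<int>} \<subseteq> S h))"
proof -
  interpret minknap_vertex n K w b \<epsilon> S Sinf \<rho> xs
  proof
    show "finite (S k)" if "k \<in> {1..K}" for k
      using S_sub that by (meson finite_atLeastAtMost finite_subset)
    show "S k \<inter> S l = {}" if "k \<in> {1..K}" "l \<in> {1..K}" "k \<noteq> l" for k l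
      using S_disj that by blast
  qed (rule extreme)
  show ?thesis using fractional_structure unfolding fractional_def .
qed

end
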